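(* For every integer $r\ge1$, $\mathrm{Var}(\mu^{(r)})\le b^2\lambda(r)$.
   Context: Fix an integer $b\ge2$. For $n\in\mathbb{N}$ with base-$b$ digits $n_k$, $s(n):=\sum_kn_k$. For $r,n\in\mathbb{N}$, $\Delta^{(r)}(n):=s(n+r)-s(n)$, and $\mu^{(r)}(d):=\lim_{N\to\infty}\frac1N|\{n<N:\Delta^{(r)}(n)=d\}|$ for $d\in\mathbb{Z}$; these limits exist and $\mu^{(r)}$ is a probability measure on $\mathbb{Z}$ with finite moments; $\mathrm{Var}(\mu^{(r)})$ is its variance. Blocks: write the expansion of $r\ge1$ as the digit string $r_\ell\cdots r_0$, $r_\ell\neq0$. A block is either a maximal run of consecutive $0$ digits (a block of $0$'s), or a maximal run of consecutive digits equal to $b-1$, or (when $b\ge3$) a single digit with value in $\{1,\dots,b-2\}$. $\lambda(r)$ is the number of blocks of $r$ that are not blocks of $0$'s (non-zero blocks). *)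

theory Defs
  imports "HOL-Analysis.Analysis"
begin

definition digit :: "nat \<Rightarrow> nat \<Rightarrow> nat \<Rightarrow> nat" where
  "digit b k n = (n div b ^ k) mod b"

text \<open>Base-b digit sum s(n). For b \<ge> 2 all digits of index \<ge> n+1 vanish.\<close>
definition digsum :: "nat \<Rightarrow> nat \<Rightarrow> nat" where
  "digsum b n = (\<Sum>k\<le>n. digit b k n)"

definition Delta :: "nat \<Rightarrow> nat \<Rightarrow> nat \<Rightarrow> int" where
  "Delta b r n = int (digsum b (n + r)) - int (digsum b n)"

definition mu :: "nat \<Rightarrow> nat \<Rightarrow> int \<Rightarrow> real" where
  "mu b r d = lim (\<lambda>N. real (card {n. n < N \<and> Delta b r n = d}) / real N)"

definition mu_mean :: "nat \<Rightarrow> nat \<Rightarrow> real" where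
  "mu_mean b r = (\<Sum>\<^sub>\<infinity>d\<in>(UNIV::int set). real_of_int d * mu b r d)"

definition mu_var :: "nat \<Rightarrow> nat \<Rightarrow> real" where
  "mu_var b r = (\<Sum>\<^sub>\<infinity>d\<in>(UNIV::int set). (real_of_int d - mu_mean b r)\<^sup>2 * mu b r d)"

text \<open>Number of non-zero blocks of r: each non-zero block is identified by its most
  significant position i, i.e. a position with digit \<noteq> 0 which is either a digit in
  {1..b-2} (a singleton block) or a digit b-1 not followed (in the more significant
  position) by another digit b-1.  Positions above the leading digit have digit 0.\<close>
definition nzblocks :: "nat \<Rightarrow> nat \<Rightarrow> nat" where
  "nzblocks b r = card {i. i \<le> r \<and> digit b i r \<noteq> 0 \<and>
      (digit b i r \<noteq> b - 1 \<or> digit b (Suc i) r \<noteq> b - 1)}"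

end

theory Submission
  imports Defs
begin

(* Take J with r < b ^ J and n < b ^ J. Then Delta(n) is the change of the digit sum of the
   J lowest digits plus the carry out of them, and such a carry occurs for at most r values
   of n. Splitting off the lowest digits of n and r expresses sums over n < b ^ (J + 1) by
   sums over n < b ^ J for r div b and r div b + 1, according to the carry out of the lowest
   digit. For the sum of squares (with carries weighted by b) this recursion gives, by
   induction along the digits of r, the bound b ^ J * b^2 * lambda(r): each non-zero block
   of r costs at most b^2. The densities mu^(r)(d) exist because Delta(n) depends only on
   n mod b ^ K outside a set of density at most r / b ^ K; letting J tend to infinity then
   bounds the second moment of mu^(r), and hence its variance, by b^2 * lambda(r). *)

lemma digit_eq_0: "n < b ^ k \<Longrightarrow> digit b k n = 0"
  by (simp add: digit_def)

lemma digsum_eq_sum_atMost: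
  assumes b: "2 \<le> b" and "n \<le> N"
  shows "digsum b n = (\<Sum>k\<le>N. digit b k n)"
proof -
  have "digit b k n = 0" if "n < k" for k
  proof (rule digit_eq_0)
    have "k < 2 ^ k" by (rule less_exp)
    also have "\<dots> \<le> b ^ k" using b by (simp add: power_mono)
    finally show "n < b ^ k" using that by simp
  qed
  then have "(\<Sum>k\<le>N. digit b k n) = (\<Sum>k\<le>n. digit b k n)"
    using \<open>n \<le> N\<close> by (intro sum.mono_neutral_right) auto
  then show ?thesis by (simp add: digsum_def)
qed

lemma digsum_0 [simp]: "digsum b 0 = 0"
  by (simp add: digsum_def digit_def)

lemma digsum_rec:
  assumes b: "2 \<le> b"
  shows "digsum b n = n mod b + digsum b (n div b)"
proof (cases n)
  case 0 then show ?thesis by simp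
next
  case (Suc n')
  have "n div b \<le> n'" using b Suc by (simp add: less_Suc_eq_le[symmetric] div_less_dividend)
  have "digsum b n = digit b 0 n + (\<Sum>k\<le>n'. digit b (Suc k) n)"
    unfolding digsum_def Suc by (rule sum.atMost_Suc_shift)
  also have "\<dots> = n mod b + (\<Sum>k\<le>n'. digit b k (n div b))"
    by (simp add: digit_def div_mult2_eq mult.commute)
  also have "\<dots> = n mod b + digsum b (n div b)"
    using b \<open>n div b \<le> n'\<close> by (simp add: digsum_eq_sum_atMost)
  finally show ?thesis .
qed

lemma digsum_less: "2 \<le> b \<Longrightarrow> m < b \<Longrightarrow> digsum b m = m"
  using digsum_rec[of b m] by simp

lemma digsum_add_mult:
  "2 \<le> b \<Longrightarrow> m0 < b \<Longrightarrow> digsum b (m0 + b * m) = m0 + digsum b m"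
  using digsum_rec[of b "m0 + b * m"] by simp

lemma digsum_mult_power_add:
  assumes b: "2 \<le> b" and "x < b ^ K"
  shows "digsum b (q * b ^ K + x) = digsum b q + digsum b x"
  using assms(2)
proof (induction K arbitrary: x)
  case 0 then show ?case by simp
next
  case (Suc K)
  have "x div b < b ^ K" using Suc.prems b by (simp add: div_less_iff_less_mult mult.commute)
  have "q * b ^ Suc K + x = x mod b + b * (q * b ^ K + x div b)"
    by (simp add: algebra_simps)
  then have "digsum b (q * b ^ Suc K + x) = x mod b + digsum b (q * b ^ K + x div b)"
    using b by (simp add: digsum_add_mult)
  also have "\<dots> = digsum b q + digsum b x"
    using Suc.IH[OF \<open>x div b < b ^ K\<close>] digsum_rec[OF b, of x] by simp
  finally show ?case .
qed

lemma digsum_Suc_le: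
  assumes b: "2 \<le> b"
  shows "digsum b (Suc n) \<le> Suc (digsum b n)"
proof (induction n rule: less_induct)
  case (less n)
  have n: "n = n mod b + b * (n div b)" by simp
  show ?case
  proof (cases "Suc (n mod b) < b")
    case True
    have "Suc n = Suc (n mod b) + b * (n div b)" by (subst (1) n) simp
    then have "digsum b (Suc n) = Suc (n mod b) + digsum b (n div b)"
      using digsum_add_mult[OF b True] by metis
    then show ?thesis using digsum_rec[OF b, of n] by simp
  next
    case False
    have "n mod b < b" using b by simp
    with False have "n mod b = b - 1" by linarith
    then have "Suc n = b * Suc (n div b)" using b by (subst (1) n) simp
    then have "digsum b (Suc n) = digsum b (Suc (n div b))"
      using digsum_add_mult[OF b, of 0 "Suc (n div b)", unfolded add_0] b by (simp only:)
    moreover have "n div b < n"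
      using b \<open>n mod b = b - 1\<close> by (cases "n = 0") (auto intro: div_less_dividend)
    ultimately show ?thesis using less digsum_rec[OF b, of n] by fastforce
  qed
qed

lemma digsum_add_le:
  assumes b: "2 \<le> b"
  shows "digsum b (x + y) \<le> digsum b x + digsum b y"
proof (induction x arbitrary: y rule: less_induct)
  case (less x)
  show ?case
  proof (cases "x = 0")
    case False
    define s where "s = x mod b + y mod b"
    define c where "c = s div b"
    have "s < 2 * b" using b by (simp add: s_def mult_2 add_strict_mono)
    then have "c \<le> 1" unfolding c_def using less_mult_imp_div_less by fastforce
    have s: "s = s mod b + b * c" by (simp add: c_def)
    have "x + y = s + b * (x div b + y div b)" by (simp add: s_def algebra_simps)
    then have "x + y = s mod b + b * (x div b + (y div b + c))"
      by (subst (asm) s) (simp add: algebra_simps)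
    then have "digsum b (x + y) = s mod b + digsum b (x div b + (y div b + c))"
      using b by (simp add: digsum_add_mult)
    also have "\<dots> \<le> s mod b + digsum b (x div b) + digsum b (y div b + c)"
      using less[of "x div b" "y div b + c"] False b by simp
    also have "digsum b (y div b + c) \<le> digsum b (y div b) + c"
      using \<open>c \<le> 1\<close> digsum_Suc_le[OF b] by (cases c) auto
    also have "s mod b + digsum b (x div b) + (digsum b (y div b) + c) \<le> digsum b x + digsum b y"
    proof -
      have "s mod b + c \<le> s" using b by (subst (2) s) simp
      then show ?thesis using digsum_rec[OF b, of x] digsum_rec[OF b, of y] by (simp add: s_def)
    qed
    finally show ?thesis by simp
  qed simp
qed

definition block_head :: "nat \<Rightarrow> nat \<Rightarrow> nat \<Rightarrow> bool" where
  "block_head b r i \<longleftrightarrow> digit b i r \<noteq> 0 \<and> (digit b i r \<noteq> b - 1 \<or> digit b (Suc i) r \<noteq> b - 1)"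

lemma digit_Suc: "digit b (Suc i) r = digit b i (r div b)"
  by (simp add: digit_def div_mult2_eq)

lemma block_head_Suc: "block_head b r (Suc i) \<longleftrightarrow> block_head b (r div b) i"
  by (simp add: block_head_def digit_Suc)

lemma digit_0: "digit b 0 r = r mod b"
  by (simp add: digit_def)

lemma block_head_0:
  "block_head b r 0 \<longleftrightarrow> r mod b \<noteq> 0 \<and> (r mod b \<noteq> b - 1 \<or> r div b mod b \<noteq> b - 1)"
  by (simp only: block_head_def digit_Suc digit_0)

lemma block_head_le:
  assumes b: "2 \<le> b" and "block_head b r i"
  shows "i \<le> r"
proof -
  have "\<not> r < b ^ i" using assms(2) digit_eq_0 by (auto simp: block_head_def)
  moreover have "i < 2 ^ i" by (rule less_exp)
  moreover have "2 ^ i \<le> b ^ i" using b by (simp add: power_mono)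
  ultimately show ?thesis by linarith
qed

lemma nzblocks_eq_card:
  assumes b: "2 \<le> b"
  shows "nzblocks b r = card {i. block_head b r i}"
proof -
  have "{i. i \<le> r \<and> block_head b r i} = {i. block_head b r i}"
    using block_head_le[OF b, of r] by blast
  then show ?thesis by (simp add: nzblocks_def block_head_def)
qed

lemma nzblocks_rec:
  assumes b: "2 \<le> b"
  shows "nzblocks b r = nzblocks b (r div b) + (if block_head b r 0 then 1 else 0)"
proof -
  let ?S = "{i. block_head b (r div b) i}"
  have "?S \<subseteq> {..r div b}" using block_head_le[OF b] by auto
  then have "finite ?S" by (rule finite_subset) simp
  have heads: "{i. block_head b r i} = {i. i = 0 \<and> block_head b r 0} \<union> Suc ` ?S"
  proof (rule set_eqI)
    fix i
    show "i \<in> {i. block_head b r i} \<longleftrightarrow> i \<in> {i. i = 0 \<and> block_head b r 0} \<union> Suc ` ?S"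
      by (cases i) (auto simp: block_head_Suc)
  qed
  have "nzblocks b r = card ({i. i = 0 \<and> block_head b r 0} \<union> Suc ` ?S)"
    unfolding nzblocks_eq_card[OF b] heads ..
  also have "\<dots> = card ?S + (if block_head b r 0 then 1 else 0)"
  proof (cases "block_head b r 0")
    case True
    then have "{i. i = 0 \<and> block_head b r 0} \<union> Suc ` ?S = insert 0 (Suc ` ?S)" by blast
    then show ?thesis using True \<open>finite ?S\<close> by (simp add: card_image)
  qed (simp add: card_image)
  finally show ?thesis by (simp add: nzblocks_eq_card[OF b])
qed

(* For m < b ^ J: carry_out says that adding r to m carries out of the J lowest digits,
   and Delta_low is the resulting change of the digit sum of these J digits. *)
definition carry_out :: "nat \<Rightarrow> nat \<Rightarrow> nat \<Rightarrow> nat \<Rightarrow> bool" where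
  "carry_out b J r m \<longleftrightarrow> b ^ J \<le> m + r"

definition Delta_low :: "nat \<Rightarrow> nat \<Rightarrow> nat \<Rightarrow> nat \<Rightarrow> real" where
  "Delta_low b J r m = real (digsum b (m + r)) - real (digsum b m) - of_bool (carry_out b J r m)"

definition Delta_low_sum :: "nat \<Rightarrow> nat \<Rightarrow> nat \<Rightarrow> real" where
  "Delta_low_sum b J r = (\<Sum>m<b ^ J. Delta_low b J r m)"

(* A carry-out contributes 2 * Delta_low + 1 to the sum of the squares of Delta; weighting it
   by b instead is what makes the recursion in J close (weighted_sq_sum_rec). *)
definition weighted_sq_sum :: "nat \<Rightarrow> nat \<Rightarrow> nat \<Rightarrow> real" where
  "weighted_sq_sum b J r = (\<Sum>m<b ^ J. (Delta_low b J r m)\<^sup>2 + real b * of_bool (carry_out b J r m))"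

lemma carry_out_Suc:
  assumes "0 < b"
  shows "carry_out b (Suc J) r m \<longleftrightarrow>
    carry_out b J (r div b + (m mod b + r mod b) div b) (m div b)"
proof -
  have "(m + r) div b = m div b + (r div b + (m mod b + r mod b) div b)"
    using div_add1_eq[of m r b] by simp
  then show ?thesis
    using less_eq_div_iff_mult_less_eq[OF assms, of "b ^ J" "m + r"]
    by (simp add: carry_out_def mult.commute)
qed

lemma Delta_low_Suc:
  fixes b J r m :: nat
  assumes b: "2 \<le> b"
  defines "c \<equiv> (m mod b + r mod b) div b"
  shows "Delta_low b (Suc J) r m = real (r mod b) - real b * real c + Delta_low b J (r div b + c) (m div b)"
proof -
  have sum: "(m + r) div b = m div b + (r div b + c)"
    using div_add1_eq[of m r b] by (simp add: c_def)
  have "(m + r) mod b + b * c = m mod b + r mod b"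
    using mod_add_eq[of m b r] mod_mult_div_eq[of "m mod b + r mod b" b] by (simp add: c_def)
  then have "real ((m + r) mod b) = real (m mod b) + real (r mod b) - real b * real c"
    by (simp flip: of_nat_add of_nat_mult)
  moreover have "digsum b (m + r) = (m + r) mod b + digsum b (m div b + (r div b + c))"
    using digsum_rec[OF b, of "m + r"] by (simp add: sum)
  moreover have "digsum b m = m mod b + digsum b (m div b)"
    by (rule digsum_rec[OF b])
  ultimately show ?thesis
    using carry_out_Suc[of b J r m] b by (simp add: Delta_low_def c_def)
qed

lemma sum_lessThan_mult_split:
  fixes f :: "nat \<Rightarrow> 'a::comm_monoid_add"
  shows "(\<Sum>m<b * N. f m) = (\<Sum>m0<b. \<Sum>m'<N. f (m0 + b * m'))"
proof -
  have "(\<Sum>m<b * N. f m) = (\<Sum>m'<N. sum f {m' * b..<m' * b + b})"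
    using sum.nat_group[of f b N] by (simp add: mult.commute)
  also have "\<dots> = (\<Sum>m'<N. \<Sum>m0<b. f (m0 + b * m'))"
  proof (rule sum.cong[OF refl])
    fix m'
    have "sum f {m' * b..<m' * b + b} = sum f {0 + m' * b..<b + m' * b}" by (simp add: add.commute)
    also have "\<dots> = (\<Sum>m0<b. f (m0 + m' * b))"
      by (subst sum.shift_bounds_nat_ivl) (simp add: atLeast0LessThan)
    finally show "sum f {m' * b..<m' * b + b} = (\<Sum>m0<b. f (m0 + b * m'))"
      by (simp add: mult.commute)
  qed
  also have "\<dots> = (\<Sum>m0<b. \<Sum>m'<N. f (m0 + b * m'))" by (rule sum.swap)
  finally show ?thesis .
qed

lemma sum_carry:
  fixes g :: "nat \<Rightarrow> real"
  assumes "r0 < b"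
  shows "(\<Sum>m0<b. g ((m0 + r0) div b)) = (real b - real r0) * g 0 + real r0 * g 1"
proof -
  have carry: "(m0 + r0) div b = of_bool (b - r0 \<le> m0)" if "m0 < b" for m0
    using that assms by (auto simp: div_eq_0_iff le_div_geq)
  have split: "{..<b} = {..<b - r0} \<union> {b - r0..<b}" using assms by auto
  have "(\<Sum>m0<b. g ((m0 + r0) div b))
      = (\<Sum>m0<b - r0. g ((m0 + r0) div b)) + (\<Sum>m0\<in>{b - r0..<b}. g ((m0 + r0) div b))"
    unfolding split by (subst sum.union_disjoint) auto
  also have "\<dots> = (\<Sum>m0<b - r0. g 0) + (\<Sum>m0\<in>{b - r0..<b}. g 1)"
    using carry by (intro arg_cong2[where f = "(+)"] sum.cong) auto
  finally show ?thesis using assms by (simp add: of_nat_diff)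
qed

lemma sum_Delta_low_Suc:
  fixes \<Phi> :: "real \<Rightarrow> bool \<Rightarrow> real" and b J r :: nat
  assumes b: "2 \<le> b"
  defines "r0 \<equiv> r mod b" and "r' \<equiv> r div b"
  shows "(\<Sum>m<b ^ Suc J. \<Phi> (Delta_low b (Suc J) r m) (carry_out b (Suc J) r m)) =
      (real b - real r0) * (\<Sum>m<b ^ J. \<Phi> (real r0 + Delta_low b J r' m) (carry_out b J r' m))
    + real r0 * (\<Sum>m<b ^ J. \<Phi> (real r0 - real b + Delta_low b J (r' + 1) m) (carry_out b J (r' + 1) m))"
proof -
  let ?G = "\<lambda>c. \<Sum>m<b ^ J.
    \<Phi> (real r0 - real b * real c + Delta_low b J (r' + c) m) (carry_out b J (r' + c) m)"
  have "(\<Sum>m<b ^ Suc J. \<Phi> (Delta_low b (Suc J) r m) (carry_out b (Suc J) r m))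
      = (\<Sum>m0<b. \<Sum>m<b ^ J. \<Phi> (Delta_low b (Suc J) r (m0 + b * m)) (carry_out b (Suc J) r (m0 + b * m)))"
    by (simp add: sum_lessThan_mult_split)
  also have "\<dots> = (\<Sum>m0<b. ?G ((m0 + r0) div b))"
  proof (rule sum.cong[OF refl])
    fix m0 assume "m0 \<in> {..<b}"
    then have "(m0 + b * m) mod b = m0" "(m0 + b * m) div b = m" for m by auto
    then show "(\<Sum>m<b ^ J. \<Phi> (Delta_low b (Suc J) r (m0 + b * m)) (carry_out b (Suc J) r (m0 + b * m)))
        = ?G ((m0 + r0) div b)"
      using b by (simp add: Delta_low_Suc carry_out_Suc r0_def r'_def)
  qed
  also have "\<dots> = (real b - real r0) * ?G 0 + real r0 * ?G 1"
    using b by (intro sum_carry) (simp add: r0_def)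
  finally show ?thesis by simp
qed

lemma Delta_low_sum_Suc:
  assumes b: "2 \<le> b"
  shows "Delta_low_sum b (Suc J) r =
      (real b - real (r mod b)) * (real b ^ J * real (r mod b) + Delta_low_sum b J (r div b))
    + real (r mod b) * (real b ^ J * (real (r mod b) - real b) + Delta_low_sum b J (r div b + 1))"
  unfolding Delta_low_sum_def using sum_Delta_low_Suc[OF b, of "\<lambda>x _. x" J r]
  by (simp add: sum.distrib)

lemma weighted_sq_sum_Suc:
  fixes b J r :: nat
  assumes b: "2 \<le> b"
  defines "r0 \<equiv> r mod b" and "r' \<equiv> r div b"
  shows "weighted_sq_sum b (Suc J) r =
      (real b - real r0) * (real b ^ J * (real r0)\<^sup>2 + 2 * real r0 * Delta_low_sum b J r' + weighted_sq_sum b J r')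
    + real r0 * (real b ^ J * (real r0 - real b)\<^sup>2 + 2 * (real r0 - real b) * Delta_low_sum b J (r' + 1)
        + weighted_sq_sum b J (r' + 1))"
proof -
  have shift: "(\<Sum>m<b ^ J. (a + Delta_low b J k m)\<^sup>2 + real b * of_bool (carry_out b J k m))
      = real b ^ J * a\<^sup>2 + 2 * a * Delta_low_sum b J k + weighted_sq_sum b J k" for a k
    by (simp add: Delta_low_sum_def weighted_sq_sum_def power2_eq_square algebra_simps
        sum.distrib sum_distrib_left)
  show ?thesis
    unfolding weighted_sq_sum_def[of b "Suc J"] r0_def r'_def
    using sum_Delta_low_Suc[OF b, of "\<lambda>x c. x\<^sup>2 + real b * of_bool c" J r]
    by (simp only: shift diff_conv_add_uminus add.assoc[symmetric])
qed

lemma div_le_power_if_le_power_Suc: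
  fixes b r J :: nat
  assumes "0 < b" and r: "r \<le> b ^ Suc J"
  shows "r div b \<le> b ^ J" and "r mod b \<noteq> 0 \<Longrightarrow> r div b + 1 \<le> b ^ J"
proof -
  have "r div b \<le> b ^ Suc J div b" using r by (rule div_le_mono)
  then show "r div b \<le> b ^ J" using \<open>0 < b\<close> by simp
  assume "r mod b \<noteq> 0"
  show "r div b + 1 \<le> b ^ J"
  proof (rule ccontr)
    assume "\<not> ?thesis"
    then have "b * b ^ J \<le> b * (r div b)" by (intro mult_le_mono2) simp
    then show False
      using r \<open>r mod b \<noteq> 0\<close> mod_mult_div_eq[of r b] power_Suc[of b J] by linarith
  qed
qed

lemma Delta_low_sum_eq_0:
  assumes b: "2 \<le> b"
  shows "r \<le> b ^ J \<Longrightarrow> Delta_low_sum b J r = 0"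
proof (induction J arbitrary: r)
  case 0
  then have "r = 0 \<or> r = 1" by auto
  then show ?case using digsum_less[OF b, of 1] b by (auto simp: Delta_low_sum_def Delta_low_def carry_out_def)
next
  case (Suc J)
  note r' = div_le_power_if_le_power_Suc[OF _ Suc.prems]
  have "Delta_low_sum b J (r div b) = 0" using Suc.IH r' b by simp
  moreover have "Delta_low_sum b J (r div b + 1) = 0" if "r mod b \<noteq> 0"
    using Suc.IH r' b that by simp
  ultimately show ?case
    using b by (cases "r mod b = 0") (simp_all add: Delta_low_sum_Suc algebra_simps)
qed

lemma weighted_sq_sum_rec:
  fixes b J r :: nat
  assumes b: "2 \<le> b" and r: "r \<le> b ^ Suc J"
  defines "r0 \<equiv> r mod b" and "r' \<equiv> r div b"
  shows "weighted_sq_sum b (Suc J) r =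
      (real b - real r0) * (real b ^ J * (real r0)\<^sup>2 + weighted_sq_sum b J r')
    + real r0 * (real b ^ J * (real b - real r0)\<^sup>2 + weighted_sq_sum b J (r' + 1))"
proof -
  note r' = div_le_power_if_le_power_Suc[OF _ r]
  have "Delta_low_sum b J r' = 0" using Delta_low_sum_eq_0[OF b] r' b by (simp add: r'_def)
  moreover have "real r0 * Delta_low_sum b J (r' + 1) = 0"
    using Delta_low_sum_eq_0[OF b] r' b by (cases "r0 = 0") (simp_all add: r0_def r'_def)
  ultimately show ?thesis
    unfolding weighted_sq_sum_Suc[OF b] r0_def[symmetric] r'_def[symmetric]
    by (simp add: power2_commute algebra_simps)
qed

lemma weighted_sq_sum_Suc_le:
  assumes b: "2 \<le> b" and r: "r \<le> b ^ Suc J"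
    and P: "weighted_sq_sum b J (r div b) \<le> real b ^ J * P"
    and Q: "r mod b \<noteq> 0 \<Longrightarrow> weighted_sq_sum b J (r div b + 1) \<le> real b ^ J * Q"
  shows "weighted_sq_sum b (Suc J) r \<le> real b ^ J *
    (real b * real (r mod b) * (real b - real (r mod b)) + (real b - real (r mod b)) * P + real (r mod b) * Q)"
proof -
  define r0 where "r0 = real (r mod b)"
  have "r0 \<le> real b" using b by (simp add: r0_def less_imp_le)
  then have "(real b - r0) * (weighted_sq_sum b J (r div b) - real b ^ J * P) \<le> 0"
    using P by (intro mult_nonneg_nonpos) auto
  moreover have "r0 * (weighted_sq_sum b J (r div b + 1) - real b ^ J * Q) \<le> 0"
    using Q by (cases "r mod b = 0") (auto simp: r0_def intro: mult_nonneg_nonpos)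
  ultimately show ?thesis
    unfolding weighted_sq_sum_rec[OF b r] r0_def[symmetric]
    by (simp add: algebra_simps power2_eq_square)
qed

lemma weighted_sq_sum_Suc_le_blocks:
  assumes b: "2 \<le> b" and r: "r \<le> b ^ Suc J"
    and P: "weighted_sq_sum b J (r div b) \<le> real b ^ J * (real b ^ 2 * L)"
    and Q: "r mod b \<noteq> 0 \<Longrightarrow> weighted_sq_sum b J (r div b + 1) \<le> real b ^ J * (real b ^ 2 * L + real b)"
  shows "weighted_sq_sum b (Suc J) r
    \<le> real b ^ Suc J * (real b ^ 2 * L + real (r mod b) * (real b - real (r mod b) + 1))"
proof -
  have "weighted_sq_sum b (Suc J) r \<le> real b ^ J * (real b * real (r mod b) * (real b - real (r mod b))
      + (real b - real (r mod b)) * (real b ^ 2 * L) + real (r mod b) * (real b ^ 2 * L + real b))"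
    by (rule weighted_sq_sum_Suc_le[OF b r P Q])
  then show ?thesis by (simp add: algebra_simps power2_eq_square)
qed

(* The sharper bounds for a last digit b - 1 are needed because a further digit b - 1 in
   front of it continues the same block. *)
definition block_bounds :: "nat \<Rightarrow> nat \<Rightarrow> nat \<Rightarrow> bool" where
  "block_bounds b J r \<longleftrightarrow>
     weighted_sq_sum b J r \<le> real b ^ J *
       (real b ^ 2 * real (nzblocks b r) - of_bool (r mod b = b - 1) * real b * (real b - 2))
   \<and> weighted_sq_sum b J (r + 1) \<le> real b ^ J *
       (real b ^ 2 * real (nzblocks b r) + real b - of_bool (r mod b = b - 1) * real b ^ 2)"

lemma block_bounds_0: "2 \<le> b \<Longrightarrow> block_bounds b 0 0"
  using digsum_less[of b 1]
  by (simp add: block_bounds_def nzblocks_def digit_def weighted_sq_sum_def Delta_low_def carry_out_def)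

lemma block_bounds_Suc_not_last:
  assumes b: "2 \<le> b" and r: "r < b ^ Suc J" and not_last: "r mod b \<noteq> b - 1"
    and IH: "block_bounds b J (r div b)"
  shows "block_bounds b (Suc J) r"
proof -
  define r0 L where "r0 = r mod b" and "L = real (nzblocks b (r div b))"
  have le: "weighted_sq_sum b J (r div b) \<le> real b ^ J * (real b ^ 2 * L)"
      "weighted_sq_sum b J (r div b + 1) \<le> real b ^ J * (real b ^ 2 * L + real b)"
    using IH b unfolding block_bounds_def L_def by (auto elim!: order.trans intro!: mult_left_mono)
  have "r0 < b" using b by (simp add: r0_def)
  then have "r0 + 1 < b" using not_last by (simp add: r0_def)
  then have "(r + 1) mod b = r0 + 1" "(r + 1) div b = r div b"
    by (auto simp: r0_def mod_Suc div_Suc)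
  have arith1: "real r0 * (real b - real r0 + 1) \<le> real b ^ 2 * of_bool (r0 \<noteq> 0)"
    using \<open>r0 + 1 < b\<close> by (cases "r0 = 0") (auto simp: power2_eq_square intro!: mult_mono)
  have arith2: "(1 + real r0) * (real b - real r0) \<le> real b ^ 2 * of_bool (r0 \<noteq> 0) + real b"
  proof (cases "r0 = 0")
    case False
    have "(1 + real r0) * (real b - real r0) \<le> real b * real b"
      using False \<open>r0 + 1 < b\<close> by (intro mult_mono) auto
    then show ?thesis using False by (simp add: power2_eq_square)
  qed simp
  have "weighted_sq_sum b (Suc J) r
      \<le> real b ^ Suc J * (real b ^ 2 * L + real r0 * (real b - real r0 + 1))"
    using weighted_sq_sum_Suc_le_blocks[OF b less_imp_le[OF r] le] by (simp add: r0_def)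
  also have "\<dots> \<le> real b ^ Suc J * (real b ^ 2 * (L + of_bool (r0 \<noteq> 0)))"
    using arith1 by (intro mult_left_mono) (simp_all add: algebra_simps)
  finally have "weighted_sq_sum b (Suc J) r \<le> real b ^ Suc J * (real b ^ 2 * (L + of_bool (r0 \<noteq> 0)))" .
  moreover have "weighted_sq_sum b (Suc J) (r + 1)
      \<le> real b ^ Suc J * (real b ^ 2 * L + (1 + real r0) * (real b - real r0))"
    using weighted_sq_sum_Suc_le_blocks[of b "r + 1" J L] b r le \<open>(r + 1) mod b = r0 + 1\<close>
      \<open>(r + 1) div b = r div b\<close> by simp
  moreover have "\<dots> \<le> real b ^ Suc J * (real b ^ 2 * (L + of_bool (r0 \<noteq> 0)) + real b)"
    using arith2 by (intro mult_left_mono) (simp_all add: algebra_simps)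
  moreover have "real (nzblocks b r) = L + of_bool (r0 \<noteq> 0)"
    using nzblocks_rec[OF b, of r] not_last by (simp add: block_head_0 L_def r0_def)
  ultimately show ?thesis
    using not_last unfolding block_bounds_def by simp
qed

lemma block_bounds_Suc_last:
  assumes b: "2 \<le> b" and r: "r < b ^ Suc J" and last: "r mod b = b - 1"
    and IH: "block_bounds b J (r div b)"
  shows "block_bounds b (Suc J) r"
proof -
  define B x L e where "B = real b" and "x = real b ^ J" and "L = real (nzblocks b (r div b))"
    and "e = (of_bool (r div b mod b = b - 1) :: real)"
  have "(r + 1) mod b = 0" "(r + 1) div b = r div b + 1"
    using b last mod_mult_div_eq[of r b] by (auto simp: mod_Suc div_Suc)
  have r0: "real (r mod b) = B - 1" using last b by (simp add: B_def of_nat_diff)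
  have L: "real (nzblocks b r) = L + (1 - e)"
    using nzblocks_rec[OF b, of r] last b by (auto simp: block_head_0 L_def e_def)
  have "weighted_sq_sum b (Suc J) r \<le> x * (B * (B - 1) + (B ^ 2 * L - e * B * (B - 2))
      + (B - 1) * (B ^ 2 * L + B - e * B ^ 2))"
    using weighted_sq_sum_Suc_le[OF b less_imp_le[OF r]] IH r0
    by (simp add: block_bounds_def B_def x_def L_def e_def)
  also have "\<dots> = B * x * (B ^ 2 * (L + (1 - e)) - B * (B - 2)) - 2 * B * x * (1 - e)"
    by (simp add: algebra_simps power2_eq_square)
  also have "\<dots> \<le> B * x * (B ^ 2 * (L + (1 - e)) - B * (B - 2))"
    using b by (simp add: B_def x_def e_def)
  finally have "weighted_sq_sum b (Suc J) r \<le> B * x * (B ^ 2 * (L + (1 - e)) - B * (B - 2))" .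
  moreover have "weighted_sq_sum b (Suc J) (r + 1) \<le> x * (B * (B ^ 2 * L + B - e * B ^ 2))"
    using weighted_sq_sum_Suc_le[of b "r + 1" J "B ^ 2 * L + B - e * B ^ 2" 0] b r IH
      \<open>(r + 1) mod b = 0\<close> \<open>(r + 1) div b = r div b + 1\<close>
    by (simp add: block_bounds_def B_def x_def L_def e_def)
  ultimately show ?thesis using last unfolding block_bounds_def L
    by (simp add: B_def x_def algebra_simps power2_eq_square)
qed

lemma block_bounds_if_less_power:
  assumes b: "2 \<le> b"
  shows "r < b ^ J \<Longrightarrow> block_bounds b J r"
proof (induction J arbitrary: r)
  case 0
  then show ?case using block_bounds_0[OF b] by simp
next
  case (Suc J)
  then have "block_bounds b J (r div b)"
    using b by (simp add: div_less_iff_less_mult mult.commute)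
  then show ?case
    using block_bounds_Suc_not_last[OF b Suc.prems] block_bounds_Suc_last[OF b Suc.prems] by blast
qed

lemma Delta_le_digsum: "2 \<le> b \<Longrightarrow> real_of_int (Delta b r n) \<le> real (digsum b r)"
  using digsum_add_le[of b n r] by (simp add: Delta_def)

lemma card_carry_out_le: "card {n. n < b ^ J \<and> carry_out b J r n} \<le> r"
proof -
  have "{n. n < b ^ J \<and> carry_out b J r n} \<subseteq> {b ^ J - r..<b ^ J}" by (auto simp: carry_out_def)
  then have "card {n. n < b ^ J \<and> carry_out b J r n} \<le> card {b ^ J - r..<b ^ J}" by (intro card_mono) auto
  then show ?thesis by simp
qed

lemma sum_Delta_sq_le:
  assumes b: "2 \<le> b" and r: "r < b ^ J"
  shows "(\<Sum>n<b ^ J. (real_of_int (Delta b r n))\<^sup>2)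
    \<le> real b ^ J * (real b ^ 2 * real (nzblocks b r)) + 2 * real (digsum b r) * real r"
proof -
  define s where "s = real (digsum b r)"
  define c where "c = (\<lambda>n. of_bool (carry_out b J r n) :: real)"
  have pointwise:
    "(real_of_int (Delta b r n))\<^sup>2 \<le> (Delta_low b J r n)\<^sup>2 + real b * c n + 2 * s * c n" for n
  proof (cases "carry_out b J r n")
    case True
    have "real_of_int (Delta b r n) = Delta_low b J r n + 1"
      using True by (simp add: Delta_def Delta_low_def)
    moreover have "real_of_int (Delta b r n) \<le> s"
      using Delta_le_digsum[OF b] by (simp add: s_def)
    ultimately show ?thesis using True b by (simp add: c_def power2_eq_square algebra_simps)
  qed (simp add: c_def Delta_def Delta_low_def)
  have "(\<Sum>n<b ^ J. (real_of_int (Delta b r n))\<^sup>2)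
      \<le> (\<Sum>n<b ^ J. (Delta_low b J r n)\<^sup>2 + real b * c n + 2 * s * c n)"
    by (intro sum_mono pointwise)
  also have "\<dots> = weighted_sq_sum b J r + 2 * s * real (card {n. n < b ^ J \<and> carry_out b J r n})"
  proof -
    have "{n. n < b ^ J \<and> carry_out b J r n} = {..<b ^ J} \<inter> Collect (carry_out b J r)" by auto
    then show ?thesis
      by (simp add: weighted_sq_sum_def c_def sum.distrib sum_distrib_left flip: sum.inter_filter)
  qed
  also have "\<dots> \<le> real b ^ J * (real b ^ 2 * real (nzblocks b r)) + 2 * s * real r"
  proof (intro add_mono mult_left_mono)
    show "weighted_sq_sum b J r \<le> real b ^ J * (real b ^ 2 * real (nzblocks b r))"
      using block_bounds_if_less_power[OF b r] b unfolding block_bounds_def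
      by (elim conjE order.trans) (simp add: mult_left_mono)
  qed (use card_carry_out_le in \<open>auto simp: s_def\<close>)
  finally show ?thesis by (simp add: s_def)
qed

lemma card_lessThan_eq_sum: "card {n. n < (N::nat) \<and> P n} = (\<Sum>n<N. of_bool (P n))"
proof -
  have "{n. n < N \<and> P n} = {..<N} \<inter> {n. P n}" by auto
  then show ?thesis using sum_of_bool_eq[of "{..<N}" P] by simp
qed

lemma card_mod_eq:
  fixes p N :: nat
  assumes p: "0 < p"
  shows "card {n. n < N \<and> Q (n mod p)} = N div p * card {x. x < p \<and> Q x} + card {x. x < N mod p \<and> Q x}"
proof -
  define q t where "q = N div p" and "t = N mod p"
  define f where "f = (\<lambda>n. of_bool (Q (n mod p)) :: nat)"
  have "t < p" using p by (simp add: t_def)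
  have "N = t + p * q" by (simp add: q_def t_def)
  then have split: "{..<N} = {..<p * q} \<union> {p * q..<t + p * q}" by auto
  have "sum f {..<N} = sum f {..<p * q} + sum f {p * q..<t + p * q}"
    unfolding split by (rule sum.union_disjoint) auto
  also have "sum f {..<p * q} = (\<Sum>x<p. \<Sum>m<q. of_bool (Q x))"
    unfolding sum_lessThan_mult_split f_def by (rule sum.cong[OF refl]) simp
  also have "sum f {p * q..<t + p * q} = (\<Sum>x<t. of_bool (Q x))"
    using sum.shift_bounds_nat_ivl[of f 0 "p * q" t] \<open>t < p\<close>
    by (simp add: atLeast0LessThan f_def)
  finally show ?thesis
    unfolding card_lessThan_eq_sum by (simp add: f_def q_def t_def sum_distrib_left mult.commute)
qed

lemma card_Collect_less_le: "card {x. x < n \<and> P x} \<le> n"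
  using card_mono[of "{..<n}" "{x. x < n \<and> P x}"] by auto

definition freq :: "(nat \<Rightarrow> bool) \<Rightarrow> nat \<Rightarrow> real" where
  "freq P N = real (card {n. n < N \<and> P n}) / real N"

lemma tendsto_freq_mod:
  fixes p :: nat and Q :: "nat \<Rightarrow> bool"
  assumes p: "0 < p"
  defines "c \<equiv> card {x. x < p \<and> Q x}"
  shows "freq (\<lambda>n. Q (n mod p)) \<longlonglongrightarrow> real c / real p"
proof -
  have approx: "\<bar>real (card {n. n < N \<and> Q (n mod p)}) - real N * real c / real p\<bar> \<le> real p" for N
  proof -
    define d where "d = card {x. x < N mod p \<and> Q x}"
    have "N mod p < p" using p by simp
    then have "real d \<le> real p" "real c \<le> real p" "real (N mod p) \<le> real p"
      using card_Collect_less_le[of "N mod p" Q] card_Collect_less_le[of p Q] by (simp_all add: d_def c_def)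
    then have "0 \<le> real (N mod p) * real c / real p" "real (N mod p) * real c / real p \<le> real p"
      using p by (auto simp: field_simps intro: mult_mono)
    moreover have "real (card {n. n < N \<and> Q (n mod p)}) - real N * real c / real p
        = real d - real (N mod p) * real c / real p"
    proof -
      have "real N = real (N mod p) + real p * real (N div p)"
        using mod_mult_div_eq[of N p] by (metis of_nat_add of_nat_mult)
      moreover have "real (card {n. n < N \<and> Q (n mod p)}) = real (N div p) * real c + real d"
        using card_mod_eq[OF p, of N Q] by (simp add: d_def c_def)
      ultimately show ?thesis using p by (simp add: field_simps)
    qed
    ultimately show ?thesis using \<open>real d \<le> real p\<close> by linarith
  qed
  have "(\<lambda>N. real (card {n. n < N \<and> Q (n mod p)}) / real N - real c / real p) \<longlonglongrightarrow> 0"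
  proof (rule Lim_null_comparison)
    show "(\<lambda>N. real p / real N) \<longlonglongrightarrow> 0" by (rule lim_const_over_n)
    have "\<bar>real (card {n. n < N \<and> Q (n mod p)}) / real N - real c / real p\<bar> \<le> real p / real N"
      if "0 < N" for N
      using approx[of N] that p by (simp add: field_simps abs_divide)
    then show "\<forall>\<^sub>F N in sequentially. norm (real (card {n. n < N \<and> Q (n mod p)}) / real N - real c / real p)
        \<le> real p / real N"
      by (intro eventually_sequentiallyI[of 1]) auto
  qed
  then show ?thesis by (simp add: LIM_zero_iff freq_def[abs_def])
qed

lemma freq_mono: "(\<And>n. P n \<Longrightarrow> Q n) \<Longrightarrow> freq P N \<le> freq Q N"
  unfolding freq_def by (intro divide_right_mono of_nat_mono card_mono) (auto intro: finite_Collect_conjI)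

lemma freq_disj_le: "freq (\<lambda>n. P n \<or> Q n) N \<le> freq P N + freq Q N"
proof -
  have "{n. n < N \<and> (P n \<or> Q n)} = {n. n < N \<and> P n} \<union> {n. n < N \<and> Q n}" by auto
  then have "card {n. n < N \<and> (P n \<or> Q n)} \<le> card {n. n < N \<and> P n} + card {n. n < N \<and> Q n}"
    by (simp add: card_Un_le)
  then show ?thesis unfolding freq_def add_divide_distrib[symmetric]
    by (intro divide_right_mono) auto
qed

lemma convergent_if_sandwiched:
  fixes a :: "nat \<Rightarrow> real"
  assumes "\<And>e. 0 < e \<Longrightarrow> \<exists>\<beta> \<pi> c d. \<beta> \<longlonglongrightarrow> c \<and> \<pi> \<longlonglongrightarrow> d \<and> d < e
    \<and> (\<forall>N. \<beta> N \<le> a N \<and> a N \<le> \<beta> N + \<pi> N)"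
  shows "convergent a"
proof (rule Cauchy_convergent, rule CauchyI)
  fix e :: real assume "0 < e"
  then obtain \<beta> \<pi> c d where \<beta>: "\<beta> \<longlonglongrightarrow> c" and \<pi>: "\<pi> \<longlonglongrightarrow> d" and "d < e / 4"
    and sandwich: "\<And>N. \<beta> N \<le> a N \<and> a N \<le> \<beta> N + \<pi> N"
    using assms[of "e / 4"] by auto
  obtain M1 where M1: "\<And>N. N \<ge> M1 \<Longrightarrow> \<bar>\<beta> N - c\<bar> < e / 4"
    using LIMSEQ_D[OF \<beta>, of "e / 4"] \<open>0 < e\<close> by auto
  obtain M2 where M2: "\<And>N. N \<ge> M2 \<Longrightarrow> \<bar>\<pi> N - d\<bar> < e / 4"
    using LIMSEQ_D[OF \<pi>, of "e / 4"] \<open>0 < e\<close> by auto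
  have bounds: "c - e / 4 < a N \<and> a N < c + 3 * e / 4" if "N \<ge> max M1 M2" for N
  proof -
    have "\<beta> N - c < e / 4 \<and> - (\<beta> N - c) < e / 4" "\<pi> N - d < e / 4 \<and> - (\<pi> N - d) < e / 4"
      using M1[of N] M2[of N] that unfolding abs_less_iff by auto
    then show ?thesis using sandwich[of N] \<open>d < e / 4\<close> by linarith
  qed
  show "\<exists>M. \<forall>m\<ge>M. \<forall>n\<ge>M. norm (a m - a n) < e"
  proof (intro exI allI impI)
    fix m n assume "max M1 M2 \<le> m" "max M1 M2 \<le> n"
    then show "norm (a m - a n) < e"
      using bounds[of m] bounds[of n] unfolding real_norm_def abs_less_iff by linarith
  qed
qed

lemma Delta_mod_power:
  assumes b: "2 \<le> b" and no_carry: "\<not> carry_out b K r (n mod b ^ K)"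
  shows "Delta b r n = Delta b r (n mod b ^ K)"
proof -
  have n: "n = n div b ^ K * b ^ K + n mod b ^ K" by (rule div_mult_mod_eq[symmetric])
  have "digsum b n = digsum b (n div b ^ K) + digsum b (n mod b ^ K)"
    using b by (subst (1) n) (rule digsum_mult_power_add; simp)
  moreover have "digsum b (n + r) = digsum b (n div b ^ K) + digsum b (n mod b ^ K + r)"
    using b no_carry by (subst (1) n) (simp add: add.assoc digsum_mult_power_add carry_out_def)
  ultimately show ?thesis by (simp add: Delta_def)
qed

lemma tendsto_mu:
  assumes b: "2 \<le> b"
  shows "freq (\<lambda>n. Delta b r n = d) \<longlonglongrightarrow> mu b r d"
proof -
  have "convergent (freq (\<lambda>n. Delta b r n = d))"
  proof (rule convergent_if_sandwiched)
    fix e :: real assume "0 < e"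
    obtain K where K: "real r / e < real b ^ K"
      using real_arch_pow[of "real b" "real r / e"] b by auto
    define p where "p = b ^ K"
    have "0 < p" using b by (simp add: p_def)
    define hit where "hit x \<longleftrightarrow> \<not> carry_out b K r x \<and> Delta b r x = d" for x
    have "real (card {x. x < p \<and> carry_out b K r x}) / real p < e"
      using card_carry_out_le[of b K r] K \<open>0 < e\<close> \<open>0 < p\<close>
      by (simp add: p_def field_simps order.strict_trans1)
    moreover have "freq (\<lambda>n. hit (n mod p)) N \<le> freq (\<lambda>n. Delta b r n = d) N
        \<and> freq (\<lambda>n. Delta b r n = d) N
          \<le> freq (\<lambda>n. hit (n mod p)) N + freq (\<lambda>n. carry_out b K r (n mod p)) N" for N
    proof
      show "freq (\<lambda>n. hit (n mod p)) N \<le> freq (\<lambda>n. Delta b r n = d) N"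
        using Delta_mod_power[OF b] by (intro freq_mono) (auto simp: hit_def p_def)
      have "hit (n mod p) \<or> carry_out b K r (n mod p)" if "Delta b r n = d" for n
        using Delta_mod_power[OF b, of K r n] that by (auto simp: hit_def p_def)
      then have "freq (\<lambda>n. Delta b r n = d) N
          \<le> freq (\<lambda>n. hit (n mod p) \<or> carry_out b K r (n mod p)) N"
        by (intro freq_mono)
      then show "freq (\<lambda>n. Delta b r n = d) N
          \<le> freq (\<lambda>n. hit (n mod p)) N + freq (\<lambda>n. carry_out b K r (n mod p)) N"
        by (rule order_trans[OF _ freq_disj_le])
    qed
    ultimately show "\<exists>\<beta> \<pi> l l'. \<beta> \<longlonglongrightarrow> l \<and> \<pi> \<longlonglongrightarrow> l' \<and> l' < e
        \<and> (\<forall>N. \<beta> N \<le> freq (\<lambda>n. Delta b r n = d) N \<and> freq (\<lambda>n. Delta b r n = d) N \<le> \<beta> N + \<pi> N)"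
      using tendsto_freq_mod[OF \<open>0 < p\<close>, of hit] tendsto_freq_mod[OF \<open>0 < p\<close>, of "carry_out b K r"]
      by (intro exI conjI allI) auto
  qed
  then show ?thesis by (simp add: convergent_LIMSEQ_iff mu_def freq_def[abs_def])
qed

lemma tendsto_mu_power:
  assumes b: "2 \<le> b"
  shows "(\<lambda>J. freq (\<lambda>n. Delta b r n = d) (b ^ J)) \<longlonglongrightarrow> mu b r d"
proof -
  have "strict_mono (\<lambda>J. b ^ J)" using b by (auto intro: strict_monoI power_strict_increasing)
  from LIMSEQ_subseq_LIMSEQ[OF tendsto_mu[OF b] this] show ?thesis by (simp add: o_def)
qed

lemma mu_nonneg: "2 \<le> b \<Longrightarrow> 0 \<le> mu b r d"
  by (rule LIMSEQ_le_const[OF tendsto_mu]) (auto simp: freq_def)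

lemma sum_freq_eq:
  fixes X :: "nat \<Rightarrow> 'a" and f :: "'a \<Rightarrow> real"
  assumes "finite D"
  shows "(\<Sum>d\<in>D. f d * freq (\<lambda>n. X n = d) N) = (\<Sum>n<N. if X n \<in> D then f (X n) else 0) / real N"
proof -
  have "f d * real (card {n. n < N \<and> X n = d}) = (\<Sum>n<N. if X n = d then f d else 0)" for d
    by (simp add: card_lessThan_eq_sum sum_distrib_left of_bool_def if_distrib cong: if_cong)
  then have "(\<Sum>d\<in>D. f d * freq (\<lambda>n. X n = d) N)
      = (\<Sum>d\<in>D. \<Sum>n<N. if X n = d then f d else 0) / real N"
    by (simp add: freq_def sum_divide_distrib)
  also have "\<dots> = (\<Sum>n<N. \<Sum>d\<in>D. if X n = d then f d else 0) / real N"
    by (subst sum.swap) (rule refl)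
  also have "\<dots> = (\<Sum>n<N. if X n \<in> D then f (X n) else 0) / real N"
    using assms by simp
  finally show ?thesis .
qed

lemma eventually_less_power:
  fixes b r :: nat
  assumes b: "2 \<le> b"
  shows "eventually (\<lambda>J. r < b ^ J) sequentially"
proof (rule eventually_sequentiallyI[of r])
  fix J assume "r \<le> J"
  have "r < 2 ^ r" by (rule less_exp)
  also have "\<dots> \<le> b ^ r" using b by (rule power_mono) simp
  also have "\<dots> \<le> b ^ J" using b \<open>r \<le> J\<close> by (intro power_increasing) auto
  finally show "r < b ^ J" .
qed

lemma sum_mu_le_1:
  assumes b: "2 \<le> b" and D: "finite D"
  shows "(\<Sum>d\<in>D. mu b r d) \<le> 1"
proof (rule LIMSEQ_le_const2)
  show "(\<lambda>J. \<Sum>d\<in>D. 1 * freq (\<lambda>n. Delta b r n = d) (b ^ J)) \<longlonglongrightarrow> (\<Sum>d\<in>D. mu b r d)"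
    using tendsto_sum[OF tendsto_mu_power[OF b]] by simp
  show "\<exists>N. \<forall>J\<ge>N. (\<Sum>d\<in>D. 1 * freq (\<lambda>n. Delta b r n = d) (b ^ J)) \<le> 1"
  proof (intro exI allI impI)
    fix J :: nat
    have "(\<Sum>n<b ^ J. if Delta b r n \<in> D then 1 else 0) \<le> (\<Sum>n<b ^ J. 1::real)"
      by (intro sum_mono) simp
    then show "(\<Sum>d\<in>D. 1 * freq (\<lambda>n. Delta b r n = d) (b ^ J)) \<le> 1"
      using b unfolding sum_freq_eq[OF D] by simp
  qed
qed

lemma sum_sq_mu_le:
  assumes b: "2 \<le> b" and D: "finite D"
  shows "(\<Sum>d\<in>D. (real_of_int d)\<^sup>2 * mu b r d) \<le> real b ^ 2 * real (nzblocks b r)"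
proof -
  define C where "C = real b ^ 2 * real (nzblocks b r)"
  define s where "s = 2 * real (digsum b r) * real r"
  let ?g = "\<lambda>J. \<Sum>d\<in>D. (real_of_int d)\<^sup>2 * freq (\<lambda>n. Delta b r n = d) (b ^ J)"
  have "?g \<longlonglongrightarrow> (\<Sum>d\<in>D. (real_of_int d)\<^sup>2 * mu b r d)"
    by (intro tendsto_sum tendsto_mult tendsto_const tendsto_mu_power[OF b])
  moreover have "(\<lambda>J. C + s * inverse (real b) ^ J) \<longlonglongrightarrow> C + s * 0"
    using b by (intro tendsto_add tendsto_mult tendsto_const LIMSEQ_realpow_zero) (auto simp: inverse_less_1_iff)
  moreover have "eventually (\<lambda>J. ?g J \<le> C + s * inverse (real b) ^ J) sequentially"
    using eventually_less_power[OF b, of r]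
  proof eventually_elim
    case (elim J)
    have "?g J = (\<Sum>n<b ^ J. if Delta b r n \<in> D then (real_of_int (Delta b r n))\<^sup>2 else 0) / real b ^ J"
      by (simp add: sum_freq_eq[OF D])
    also have "\<dots> \<le> (\<Sum>n<b ^ J. (real_of_int (Delta b r n))\<^sup>2) / real b ^ J"
      by (intro divide_right_mono sum_mono) auto
    also have "\<dots> \<le> (real b ^ J * C + s) / real b ^ J"
      using sum_Delta_sq_le[OF b elim] by (intro divide_right_mono) (simp_all add: C_def s_def)
    also have "\<dots> = C + s * inverse (real b) ^ J"
      using b by (simp add: field_simps power_inverse)
    finally show ?case .
  qed
  ultimately show ?thesis unfolding C_def by (intro tendsto_le[OF trivial_limit_sequentially]) auto
qed

(* Mass at most 1 suffices, so the total mass of mu^(r) never has to be computed. *)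
lemma infsum_centered_sq_le:
  fixes p X :: "'a \<Rightarrow> real"
  assumes p_nonneg: "\<And>x. 0 \<le> p x" and p: "p summable_on UNIV" and p_le_1: "infsum p UNIV \<le> 1"
    and X2: "(\<lambda>x. (X x)\<^sup>2 * p x) summable_on UNIV"
  shows "(\<Sum>\<^sub>\<infinity>x. (X x - (\<Sum>\<^sub>\<infinity>y. X y * p y))\<^sup>2 * p x) \<le> (\<Sum>\<^sub>\<infinity>x. (X x)\<^sup>2 * p x)"
proof -
  define m where "m = (\<Sum>\<^sub>\<infinity>y. X y * p y)"
  have "norm (X x * p x) \<le> (X x)\<^sup>2 * p x + p x" for x
  proof -
    have "0 \<le> (\<bar>X x\<bar> - 1)\<^sup>2" by simp
    then have "\<bar>X x\<bar> \<le> (X x)\<^sup>2 + 1" by (simp add: power2_eq_square algebra_simps abs_mult_self_eq)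
    then show ?thesis using p_nonneg[of x] mult_right_mono by (fastforce simp: abs_mult algebra_simps)
  qed
  then have "(\<lambda>x. norm (X x * p x)) summable_on UNIV"
    by (intro summable_on_comparison_test[OF summable_on_add[OF X2 p]]) auto
  then have X1: "(\<lambda>x. X x * p x) summable_on UNIV"
    using summable_on_iff_abs_summable_on_real by blast
  have "(\<Sum>\<^sub>\<infinity>x. (X x - m)\<^sup>2 * p x)
      = (\<Sum>\<^sub>\<infinity>x. (X x)\<^sup>2 * p x + (- 2 * m * (X x * p x) + m\<^sup>2 * p x))"
    by (intro infsum_cong) (simp add: power2_eq_square algebra_simps)
  also have "\<dots> = (\<Sum>\<^sub>\<infinity>x. (X x)\<^sup>2 * p x)
      + ((\<Sum>\<^sub>\<infinity>x. - 2 * m * (X x * p x)) + (\<Sum>\<^sub>\<infinity>x. m\<^sup>2 * p x))"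
  proof -
    have "(\<lambda>x. - 2 * m * (X x * p x)) summable_on UNIV" "(\<lambda>x. m\<^sup>2 * p x) summable_on UNIV"
      by (rule summable_on_cmult_right[OF X1], rule summable_on_cmult_right[OF p])
    then show ?thesis using X2 by (simp only: infsum_add summable_on_add)
  qed
  also have "\<dots> = (\<Sum>\<^sub>\<infinity>x. (X x)\<^sup>2 * p x) - 2 * m * m + m\<^sup>2 * infsum p UNIV"
  proof -
    have "(\<Sum>\<^sub>\<infinity>x. - 2 * m * (X x * p x)) = - 2 * m * m"
      unfolding m_def by (rule infsum_cmult_right) (rule X1)
    moreover have "(\<Sum>\<^sub>\<infinity>x. m\<^sup>2 * p x) = m\<^sup>2 * infsum p UNIV"
      by (rule infsum_cmult_right) (rule p)
    ultimately show ?thesis by simp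
  qed
  also have "\<dots> \<le> (\<Sum>\<^sub>\<infinity>x. (X x)\<^sup>2 * p x)"
    using mult_left_mono[OF p_le_1, of "m\<^sup>2"] zero_le_power2[of m] power2_eq_square[of m] by linarith
  finally show ?thesis by (simp add: m_def)
qed

lemma mu_summable:
  assumes b: "2 \<le> b"
  shows "mu b r summable_on UNIV" and "infsum (mu b r) UNIV \<le> 1"
proof -
  show "mu b r summable_on UNIV"
    using mu_nonneg[OF b] sum_mu_le_1[OF b]
    by (intro nonneg_bdd_above_summable_on bdd_aboveI2[where M = 1]) auto
  then show "infsum (mu b r) UNIV \<le> 1"
    using sum_mu_le_1[OF b] by (intro infsum_le_finite_sums) auto
qed

lemma mu_second_moment_le:
  assumes b: "2 \<le> b"
  shows "(\<lambda>d. (real_of_int d)\<^sup>2 * mu b r d) summable_on UNIV"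
    and "(\<Sum>\<^sub>\<infinity>d. (real_of_int d)\<^sup>2 * mu b r d) \<le> real b ^ 2 * real (nzblocks b r)"
proof -
  show "(\<lambda>d. (real_of_int d)\<^sup>2 * mu b r d) summable_on UNIV"
    using mu_nonneg[OF b] sum_sq_mu_le[OF b]
    by (intro nonneg_bdd_above_summable_on bdd_aboveI2[where M = "real b ^ 2 * real (nzblocks b r)"]) auto
  then show "(\<Sum>\<^sub>\<infinity>d. (real_of_int d)\<^sup>2 * mu b r d) \<le> real b ^ 2 * real (nzblocks b r)"
    using sum_sq_mu_le[OF b] by (intro infsum_le_finite_sums) auto
qed

theorem mainTheorem15:
  fixes b r :: nat
  assumes "2 \<le> b" and "1 \<le> r"
  shows "mu_var b r \<le> real (b ^ 2) * real (nzblocks b r)"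
proof -
  \<comment> \<open>The bound holds for r = 0 as well.\<close>
  have "mu_var b r \<le> (\<Sum>\<^sub>\<infinity>d. (real_of_int d)\<^sup>2 * mu b r d)"
    unfolding mu_var_def mu_mean_def
    using mu_nonneg[OF assms(1)] mu_summable[OF assms(1)] mu_second_moment_le(1)[OF assms(1)]
    by (rule infsum_centered_sq_le)
  also have "\<dots> \<le> real b ^ 2 * real (nzblocks b r)"
    by (rule mu_second_moment_le(2)[OF assms(1)])
  finally show ?thesis by simp
qed

end
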